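(* Let $n\geq 2$, let $a,b$ be integers with $1\leq a<b\leq n$, and let $\sigma$ be an $(n-1)$-permutation. Then there exists a u-p-word for $n$-permutations of the form $\Diamond_{a,b}u_2u_3\cdots u_N$ with $\mathrm{red}(u_2u_3\cdots u_n)=\sigma$ if and only if either ($a=1$ and $\sigma=12\cdots(n-1)$) or ($b=n$ and $\sigma=(n-1)(n-2)\cdots 1$).
   Context: An $n$-permutation is a permutation $\pi_1\cdots\pi_n$ of $\{1,\ldots,n\}$. For a word $w$ of distinct numbers, $\mathrm{red}(w)$ is obtained by replacing the $i$-th smallest letter by $i$. For integers $1\leq a<b\leq n$, $\Diamond_{a,b}$ is a restricted wildcard symbol. Consider a word $u=\Diamond_{a,b}u_2u_3\cdots u_N$ with $N\geq n$ and $u_2,\ldots,u_N$ positive integers. Its factors of length $n$ are $u_iu_{i+1}\cdots u_{i+n-1}$ for $1\leq i\leq N-n+1$ (with $u_1=\Diamond_{a,b}$); each factor's integer letters must be pairwise distinct. The first factor $\Diamond_{a,b}u_2\cdots u_n$ covers exactly the $n$-permutations $\pi$ with $\pi_1\in\{a,b\}$ and $\mathrm{red}(\pi_2\cdots\pi_n)=\mathrm{red}(u_2\cdots u_n)$ (i.e., the wildcard is replaced by a value that becomes the $a$-th or $b$-th smallest entry); a factor $u_i\cdots u_{i+n-1}$ with $i\geq 2$ covers only the $n$-permutation $\mathrm{red}(u_i\cdots u_{i+n-1})$. Such a word is a u-p-word for $n$-permutations if every $n$-permutation is covered by exactly one of its length-$n$ factors. *)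

theory Defs
  imports Main
begin

definition perm_list :: "nat \<Rightarrow> nat list \<Rightarrow> bool" where
  "perm_list n p \<longleftrightarrow> length p = n \<and> set p = {1..n}"

definition red :: "nat list \<Rightarrow> nat list" where
  "red w = map (\<lambda>x. card {y \<in> set w. y \<le> x}) w"

(* The word u = Diamond_{a,b} u_2 ... u_N is represented by v = [u_2, ..., u_N],
   so N = length v + 1.  Factor i (1 <= i <= N-n+1):
   i = 1 : Diamond u_2 ... u_n, i.e. wildcard followed by take (n-1) v;
   i >= 2: u_i ... u_{i+n-1} = take n (drop (i-2) v). *)
definition covers :: "nat \<Rightarrow> nat \<Rightarrow> nat \<Rightarrow> nat list \<Rightarrow> nat \<Rightarrow> nat list \<Rightarrow> bool" where
  "covers n a b v i p \<longleftrightarrow>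
     (if i = 1 then hd p \<in> {a, b} \<and> red (tl p) = red (take (n - 1) v)
      else p = red (take n (drop (i - 2) v)))"

definition upword :: "nat \<Rightarrow> nat \<Rightarrow> nat \<Rightarrow> nat list \<Rightarrow> bool" where
  "upword n a b v \<longleftrightarrow>
     n \<le> length v + 1 \<and> 0 \<notin> set v \<and>
     distinct (take (n - 1) v) \<and>
     (\<forall>j. j + n \<le> length v \<longrightarrow> distinct (take n (drop j v))) \<and>
     (\<forall>p. perm_list n p \<longrightarrow>
        card {i \<in> {1..length v + 2 - n}. covers n a b v i p} = 1)"

end

theory Submission
  imports Defs "HOL-Library.Multiset" "Graph_Theory.Euler"
begin

text \<open>An (m+1)-permutation is an arc of the overlap graph on m-permutations, leading from the
pattern of its first m entries to the pattern of its last m entries; this graph is connected and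
balanced. Since every permutation is covered exactly once, the factors of a u-p-word after the
wildcard factor form a trail from \<open>\<sigma>\<close> that uses exactly the arcs not covered by the wildcard
factor, i.e. all arcs except the two arcs into \<open>\<sigma>\<close> starting with a and b. A trail leaves
\<open>\<sigma>\<close> at most once more often than it enters it, so by balance one of these two arcs must be a
loop at \<open>\<sigma>\<close>. Conversely, if one of them is a loop, deleting both arcs from an Euler circuit
leaves such a trail, and every trail is realised by a word of positive integers. Finally, a
permutation whose first m and last m entries have the same pattern is monotone.\<close>

lemma length_red [simp]: "length (red w) = length w"
  by (simp add: red_def)

lemma nth_red: "i < length w \<Longrightarrow> red w ! i = card {y \<in> set w. y \<le> w ! i}"
  by (simp add: red_def)

lemma card_le_strict_mono:
  fixes x y :: nat
  assumes "finite S" "y \<in> S" "x < y"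
  shows "card {z \<in> S. z \<le> x} < card {z \<in> S. z \<le> y}"
proof (rule psubset_card_mono)
  have "{z \<in> S. z \<le> x} \<subseteq> {z \<in> S. z \<le> y}"
    using assms by auto
  moreover have "y \<in> {z \<in> S. z \<le> y} - {z \<in> S. z \<le> x}"
    using assms by simp
  ultimately show "{z \<in> S. z \<le> x} \<subset> {z \<in> S. z \<le> y}"
    by blast
qed (use assms in simp)

lemma red_less_iff:
  assumes "i < length w" "j < length w"
  shows "red w ! i < red w ! j \<longleftrightarrow> w ! i < w ! j"
proof
  assume "w ! i < w ! j"
  then show "red w ! i < red w ! j"
    using assms by (simp add: nth_red card_le_strict_mono)
next
  assume less: "red w ! i < red w ! j"
  show "w ! i < w ! j"
  proof (rule ccontr)
    assume "\<not> w ! i < w ! j"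
    then have "red w ! j \<le> red w ! i"
      using assms by (auto simp: nth_red intro!: card_mono)
    with less show False by simp
  qed
qed

lemma distinct_red [simp]: "distinct (red w) \<longleftrightarrow> distinct w"
proof -
  have "red w ! i = red w ! j \<longleftrightarrow> w ! i = w ! j" if "i < length w" "j < length w" for i j
    using red_less_iff[OF that] red_less_iff[OF that(2,1)] by (metis linorder_neqE_nat less_irrefl)
  then show ?thesis by (auto simp: distinct_conv_nth)
qed

lemma red_inj_on_set:
  assumes "set x = set y" "red x = red y"
  shows "x = y"
proof (rule nth_equalityI)
  show len: "length x = length y"
    using assms(2) by (metis length_red)
  fix i assume i: "i < length x"
  have mem: "x ! i \<in> set x" "y ! i \<in> set x"
    using i len nth_mem[of i x] nth_mem[of i y] unfolding assms(1) by simp_all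
  have eq: "card {z \<in> set x. z \<le> x ! i} = card {z \<in> set x. z \<le> y ! i}"
    using arg_cong[OF assms(2), of "\<lambda>r. r ! i"] i len by (simp add: nth_red assms(1))
  show "x ! i = y ! i"
  proof (rule ccontr)
    assume "x ! i \<noteq> y ! i"
    then consider "x ! i < y ! i" | "y ! i < x ! i"
      by linarith
    then show False
      using card_le_strict_mono[OF finite_set mem(2), of "x ! i"]
        card_le_strict_mono[OF finite_set mem(1), of "y ! i"] eq
      by cases simp_all
  qed
qed

definition same_pattern :: "nat list \<Rightarrow> nat list \<Rightarrow> bool" where
  "same_pattern x y \<longleftrightarrow>
     length x = length y \<and> (\<forall>i<length x. \<forall>j<length x. x ! i < x ! j \<longleftrightarrow> y ! i < y ! j)"

lemma same_pattern_red: "same_pattern w (red w)"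
  by (simp add: same_pattern_def red_less_iff)

lemma same_pattern_sym: "same_pattern x y \<Longrightarrow> same_pattern y x"
  by (auto simp: same_pattern_def)

lemma same_pattern_trans: "same_pattern x y \<Longrightarrow> same_pattern y z \<Longrightarrow> same_pattern x z"
  by (auto simp: same_pattern_def)

lemma same_pattern_take_drop:
  "same_pattern x y \<Longrightarrow> same_pattern (take k (drop j x)) (take k (drop j y))"
  by (auto simp: same_pattern_def min_def)

lemma same_pattern_map_strict_mono:
  "strict_mono f \<Longrightarrow> same_pattern (map f w) w"
  by (simp add: same_pattern_def strict_mono_less)

lemma same_pattern_Cons:
  "same_pattern (x # xs) (y # ys) \<longleftrightarrow>
     same_pattern xs ys \<and>
     (\<forall>i<length xs. (x < xs ! i \<longleftrightarrow> y < ys ! i) \<and> (xs ! i < x \<longleftrightarrow> ys ! i < y))"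
  by (auto simp: same_pattern_def All_less_Suc2)

lemma red_eq_iff_same_pattern:
  assumes "distinct x" "distinct y"
  shows "red x = red y \<longleftrightarrow> same_pattern x y"
proof
  assume "red x = red y"
  then show "same_pattern x y"
    by (metis same_pattern_red same_pattern_sym same_pattern_trans)
next
  assume sp: "same_pattern x y"
  have rank: "red w ! i = card {j. j < length w \<and> w ! j \<le> w ! i}"
    if "distinct w" "i < length w" for w :: "nat list" and i
  proof -
    have "{z \<in> set w. z \<le> w ! i} = (nth w) ` {j. j < length w \<and> w ! j \<le> w ! i}"
      by (auto simp: in_set_conv_nth)
    moreover have "inj_on (nth w) {j. j < length w \<and> w ! j \<le> w ! i}"
      using that(1) by (auto simp: inj_on_def nth_eq_iff_index_eq)
    ultimately show ?thesis
      using that by (simp add: nth_red card_image)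
  qed
  show "red x = red y"
  proof (rule nth_equalityI)
    show "length (red x) = length (red y)"
      using sp by (simp add: same_pattern_def)
    fix i assume i: "i < length (red x)"
    have "{j. j < length x \<and> x ! j \<le> x ! i} = {j. j < length y \<and> y ! j \<le> y ! i}"
      using sp i by (auto simp: same_pattern_def not_less[symmetric])
    then show "red x ! i = red y ! i"
      using assms sp i by (simp add: rank same_pattern_def)
  qed
qed

lemma red_red_take_drop:
  assumes "distinct w"
  shows "red (take k (drop j (red w))) = red (take k (drop j w))"
  using assms same_pattern_take_drop[OF same_pattern_sym[OF same_pattern_red]]
  by (simp add: red_eq_iff_same_pattern)

lemma red_map_strict_mono:
  assumes "distinct w" "strict_mono f"
  shows "red (map f w) = red w"
  using assms by (simp add: red_eq_iff_same_pattern same_pattern_map_strict_mono distinct_map strict_mono_imp_inj_on)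

lemma perm_list_distinct: "perm_list k p \<Longrightarrow> distinct p"
  unfolding perm_list_def by (metis card_atLeastAtMost card_distinct diff_Suc_1)

lemma red_perm_list: assumes "perm_list k p" shows "red p = p"
proof (rule nth_equalityI)
  fix i assume i: "i < length (red p)"
  then have "p ! i \<in> {1..k}"
    using assms unfolding perm_list_def by (metis length_red nth_mem)
  moreover have "{y \<in> set p. y \<le> p ! i} = {1..p ! i}"
    using assms calculation unfolding perm_list_def by auto
  ultimately show "red p ! i = p ! i"
    using i by (simp add: nth_red)
qed simp

lemma perm_list_length: "perm_list k p \<Longrightarrow> length p = k"
  by (simp add: perm_list_def)

lemma perm_list_red: "distinct w \<Longrightarrow> perm_list (length w) (red w)"
proof -
  assume dw: "distinct w"
  have "set (red w) \<subseteq> {1..length w}"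
  proof
    fix z assume "z \<in> set (red w)"
    then obtain i where i: "i < length w" "z = red w ! i"
      by (auto simp: in_set_conv_nth)
    have "w ! i \<in> {y \<in> set w. y \<le> w ! i}"
      using i by simp
    then have "1 \<le> card {y \<in> set w. y \<le> w ! i}"
      by (simp add: Suc_le_eq card_gt_0_iff) blast
    moreover have "card {y \<in> set w. y \<le> w ! i} \<le> card (set w)"
      by (rule card_mono) auto
    ultimately show "z \<in> {1..length w}"
      using i dw by (simp add: nth_red distinct_card)
  qed
  moreover have "card (set (red w)) = length w"
    using dw by (simp add: distinct_card)
  ultimately show ?thesis
    by (simp add: perm_list_def card_subset_eq)
qed

lemma perm_list_upt: "perm_list k [1..<Suc k]"
  by (simp add: perm_list_def atLeastLessThanSuc_atLeastAtMost del: upt_Suc)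

lemma perm_list_rev_upt: "perm_list k (rev [1..<Suc k])"
  by (simp add: perm_list_def atLeastLessThanSuc_atLeastAtMost del: upt_Suc)

lemma finite_perm_lists: "finite {p. perm_list k p}"
  by (rule finite_subset[OF _ finite_lists_length_eq[OF finite_atLeastAtMost, of 1 k k]])
    (auto simp: perm_list_def)

definition cons_perm :: "nat \<Rightarrow> nat list \<Rightarrow> nat list" where
  "cons_perm c s = c # map (\<lambda>x. if x < c then x else Suc x) s"

lemma cons_perm_simps:
  "hd (cons_perm c s) = c" "tl (cons_perm c s) = map (\<lambda>x. if x < c then x else Suc x) s"
  by (simp_all add: cons_perm_def)

lemma perm_list_cons_perm:
  assumes "perm_list m s" "1 \<le> c" "c \<le> Suc m"
  shows "perm_list (Suc m) (cons_perm c s)"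
proof -
  let ?f = "\<lambda>x::nat. if x < c then x else Suc x"
  have "?f ` {1..m} = {1..Suc m} - {c}"
  proof
    show "{1..Suc m} - {c} \<subseteq> ?f ` {1..m}"
    proof
      fix y assume y: "y \<in> {1..Suc m} - {c}"
      show "y \<in> ?f ` {1..m}"
      proof (cases "y < c")
        case True
        then show ?thesis using y assms by (intro rev_image_eqI[of y]) auto
      next
        case False
        then show ?thesis using y assms by (intro rev_image_eqI[of "y - 1"]) auto
      qed
    qed
  qed auto
  then have "set (cons_perm c s) = {1..Suc m}"
    using assms by (auto simp: cons_perm_def perm_list_def)
  then show ?thesis
    using assms(1) by (simp add: perm_list_def cons_perm_def)
qed

lemma red_tl_cons_perm: "perm_list m s \<Longrightarrow> red (tl (cons_perm c s)) = s"
  by (simp add: cons_perm_simps red_map_strict_mono perm_list_distinct red_perm_list strict_mono_def)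

lemma set_tl_perm_list:
  assumes "perm_list (Suc m) p"
  shows "set (tl p) = {1..Suc m} - {hd p}"
proof -
  obtain c t where p: "p = c # t"
    using assms by (cases p) (auto simp: perm_list_def)
  have "c \<notin> set t" "insert c (set t) = {1..Suc m}"
    using assms perm_list_distinct[OF assms] p by (simp_all add: perm_list_def)
  then show ?thesis
    using p by auto
qed

lemma perm_list_eq_cons_perm:
  assumes "perm_list (Suc m) p" "perm_list m s" "red (tl p) = s"
  shows "p = cons_perm (hd p) s"
proof -
  have "hd p \<in> {1..Suc m}"
    using assms(1) by (cases p) (auto simp: perm_list_def)
  then have q: "perm_list (Suc m) (cons_perm (hd p) s)"
    using perm_list_cons_perm[OF assms(2)] by simp
  have "tl p = tl (cons_perm (hd p) s)"
  proof (rule red_inj_on_set)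
    show "set (tl p) = set (tl (cons_perm (hd p) s))"
      using set_tl_perm_list[OF assms(1)] set_tl_perm_list[OF q] by (simp add: cons_perm_simps)
    show "red (tl p) = red (tl (cons_perm (hd p) s))"
      using red_tl_cons_perm[OF assms(2)] assms(3) by simp
  qed
  moreover have "p \<noteq> []"
    using assms(1) by (auto simp: perm_list_def)
  ultimately show ?thesis
    by (cases p) (simp_all add: cons_perm_def)
qed

lemma perm_list_sorted_eq_upt:
  assumes "perm_list k p" "sorted_wrt (<) p"
  shows "p = [1..<Suc k]"
proof (rule sorted_distinct_set_unique)
  show "sorted p" "distinct p"
    using assms by (simp_all add: strict_sorted_imp_sorted perm_list_distinct)
  show "set p = set [1..<Suc k]"
    using assms(1) by (simp add: perm_list_def atLeastLessThanSuc_atLeastAtMost del: upt_Suc)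
qed (simp_all del: upt_Suc)

lemma perm_list_self_overlap:
  assumes p: "perm_list (Suc m) p" and overlap: "red (take m p) = red (tl p)"
  shows "p = [1..<Suc (Suc m)] \<or> p = rev [1..<Suc (Suc m)]"
proof -
  have dp: "distinct p" and len: "length p = Suc m"
    using p by (simp_all add: perm_list_distinct perm_list_length)
  have "same_pattern (take m p) (tl p)"
    using overlap dp by (simp add: red_eq_iff_same_pattern distinct_tl)
  then have pattern: "take m p ! i < take m p ! j \<longleftrightarrow> tl p ! i < tl p ! j"
    if "i < m" "j < m" for i j
    using that len by (simp add: same_pattern_def)
  have step: "p ! i < p ! Suc i \<longleftrightarrow> p ! Suc i < p ! Suc (Suc i)" if "Suc i < m" for i
    using pattern[of i "Suc i"] that len by (simp add: nth_tl)
  have same_direction: "p ! i < p ! Suc i \<longleftrightarrow> p ! 0 < p ! Suc 0" if "i < m" for i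
    using that
  proof (induction i)
    case (Suc i)
    then show ?case
      using step[of i] by simp
  qed simp
  show ?thesis
  proof (cases "p ! 0 < p ! Suc 0")
    case True
    have "p ! i < p ! Suc i" if "Suc i < length p" for i
      using same_direction[of i] True that len by simp
    then have "p = [1..<Suc (Suc m)]"
      using perm_list_sorted_eq_upt[OF p] by (simp add: sorted_wrt_iff_nth_Suc_transp)
    then show ?thesis ..
  next
    case False
    have "p ! Suc i < p ! i" if "Suc i < length p" for i
    proof -
      have "p ! i \<noteq> p ! Suc i"
        using dp that by (simp add: nth_eq_iff_index_eq)
      then show ?thesis
        using same_direction[of i] False that len by simp
    qed
    then have "rev p = [1..<Suc (Suc m)]"
      using perm_list_sorted_eq_upt[of "Suc m" "rev p"] p
      by (simp add: perm_list_def sorted_wrt_rev sorted_wrt_iff_nth_Suc_transp)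
    then show ?thesis
      by (metis rev_rev_ident)
  qed
qed

lemma red_take_tl_upt:
  "red (take m [1..<Suc (Suc m)]) = [1..<Suc m]" "red (tl [1..<Suc (Suc m)]) = [1..<Suc m]"
proof -
  have "take m [1..<Suc (Suc m)] = [1..<Suc m]"
    by (simp add: take_upt del: upt_Suc)
  then show "red (take m [1..<Suc (Suc m)]) = [1..<Suc m]"
    using red_perm_list[OF perm_list_upt] by simp
  have "tl [1..<Suc (Suc m)] = map Suc [1..<Suc m]"
    by (simp add: map_Suc_upt upt_conv_Cons del: upt_Suc)
  then show "red (tl [1..<Suc (Suc m)]) = [1..<Suc m]"
    using red_map_strict_mono[of "[1..<Suc m]" Suc] red_perm_list[OF perm_list_upt]
    by (simp add: strict_mono_Suc_iff del: upt_Suc)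
qed

lemma red_take_tl_rev_upt:
  "red (take m (rev [1..<Suc (Suc m)])) = rev [1..<Suc m]"
  "red (tl (rev [1..<Suc (Suc m)])) = rev [1..<Suc m]"
proof -
  have "[1..<Suc (Suc m)] = map Suc (0 # [1..<Suc m])"
    by (simp add: map_Suc_upt upt_conv_Cons del: upt_Suc)
  then have "take m (rev [1..<Suc (Suc m)]) = map Suc (rev [1..<Suc m])"
    by (simp add: rev_map)
  then show "red (take m (rev [1..<Suc (Suc m)])) = rev [1..<Suc m]"
    using red_map_strict_mono[of "rev [1..<Suc m]" Suc] red_perm_list[OF perm_list_rev_upt]
    by (simp add: strict_mono_Suc_iff del: upt_Suc)
  show "red (tl (rev [1..<Suc (Suc m)])) = rev [1..<Suc m]"
    using red_perm_list[OF perm_list_rev_upt] by simp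
qed

definition windows :: "nat \<Rightarrow> 'a list \<Rightarrow> 'a list list" where
  "windows k w = map (\<lambda>j. take k (drop j w)) [0..<Suc (length w) - k]"

lemma length_windows [simp]: "length (windows k w) = Suc (length w) - k"
  by (simp add: windows_def)

lemma nth_windows [simp]: "j < Suc (length w) - k \<Longrightarrow> windows k w ! j = take k (drop j w)"
  by (simp add: windows_def)

lemma set_windows: "set (windows k w) = {take k (drop j w) | j. j + k \<le> length w}"
  by (auto simp: windows_def)

lemma length_in_windows: "u \<in> set (windows k w) \<Longrightarrow> length u = k"
  by (auto simp: set_windows)

lemma perm_list_red_windows:
  "\<forall>u\<in>set (windows k w). distinct u \<Longrightarrow> set (map red (windows k w)) \<subseteq> {p. perm_list k p}"
  using perm_list_red length_in_windows by fastforce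

lemma windows_Cons:
  "k \<le> length w \<Longrightarrow> windows (Suc k) (x # w) = take (Suc k) (x # w) # windows (Suc k) w"
  by (simp add: windows_def Suc_diff_le upt_conv_Cons map_Suc_upt[symmetric] del: upt_Suc)

lemma windows_map: "windows k (map f w) = map (map f) (windows k w)"
  by (simp add: windows_def take_map drop_map)

definition first_covered :: "nat \<Rightarrow> nat \<Rightarrow> nat \<Rightarrow> nat list \<Rightarrow> nat list set" where
  "first_covered n a b v =
     {p. perm_list n p \<and> hd p \<in> {a, b} \<and> red (tl p) = red (take (n - 1) v)}"

lemma count_eq_one_iff_distinct_set_Diff:
  assumes "set xs \<subseteq> A" "F \<subseteq> A"
  shows "(\<forall>p\<in>A. of_bool (p \<in> F) + count (mset xs) p = 1) \<longleftrightarrow> distinct xs \<and> set xs = A - F"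
proof
  assume count: "\<forall>p\<in>A. of_bool (p \<in> F) + count (mset xs) p = 1"
  have "set xs \<subseteq> A - F"
  proof
    fix p assume "p \<in> set xs"
    then have "p \<in> A" "0 < count (mset xs) p"
      using assms(1) count_mset_gt_0 by auto
    then show "p \<in> A - F"
      using count by fastforce
  qed
  moreover have "A - F \<subseteq> set xs"
  proof
    fix p assume "p \<in> A - F"
    then have "count (mset xs) p = 1"
      using bspec[OF count, of p] by simp
    then show "p \<in> set xs"
      using count_mset_0_iff[of xs p] by linarith
  qed
  moreover have "count (mset xs) p = (if p \<in> set xs then 1 else 0)" for p
    using bspec[OF count, of p] calculation(1) by (cases "p \<in> set xs") auto
  ultimately show "distinct xs \<and> set xs = A - F"
    by (simp add: distinct_count_atmost_1)
next
  assume xs: "distinct xs \<and> set xs = A - F"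
  then have "count (mset xs) p = (if p \<in> A - F then 1 else 0)" for p
    using distinct_count_atmost_1 by metis
  then show "\<forall>p\<in>A. of_bool (p \<in> F) + count (mset xs) p = 1"
    by simp
qed

lemma card_covering_factors:
  assumes "n \<le> length v + 1" "perm_list n p"
  shows "card {i \<in> {1..length v + 2 - n}. covers n a b v i p} =
    of_bool (p \<in> first_covered n a b v) + count (mset (map red (windows n v))) p"
proof -
  define ws where "ws = map red (windows n v)"
  define J where "J = {j. j < length ws \<and> ws ! j = p}"
  define X where "X = {i \<in> {1::nat}. p \<in> first_covered n a b v}"
  have "{i \<in> {1..length v + 2 - n}. covers n a b v i p} = X \<union> (\<lambda>j. j + 2) ` J"
  proof (intro set_eqI iffI)
    fix i assume i: "i \<in> {i \<in> {1..length v + 2 - n}. covers n a b v i p}"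
    show "i \<in> X \<union> (\<lambda>j. j + 2) ` J"
    proof (cases "i = 1")
      case True
      then show ?thesis
        using i assms(2) by (simp add: covers_def first_covered_def X_def)
    next
      case False
      then have "i - 2 \<in> J"
        using i assms(1) by (auto simp: covers_def J_def ws_def)
      moreover have "i = i - 2 + 2"
        using i False by auto
      ultimately show ?thesis
        by blast
    qed
  next
    fix i assume "i \<in> X \<union> (\<lambda>j. j + 2) ` J"
    then show "i \<in> {i \<in> {1..length v + 2 - n}. covers n a b v i p}"
      using assms(1) by (auto simp: covers_def first_covered_def X_def J_def ws_def)
  qed
  then have "card {i \<in> {1..length v + 2 - n}. covers n a b v i p} = card (X \<union> (\<lambda>j. j + 2) ` J)"
    by simp
  also have "\<dots> = card X + card ((\<lambda>j. j + 2) ` J)"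
    by (rule card_Un_disjoint) (auto simp: X_def J_def)
  also have "card X = of_bool (p \<in> first_covered n a b v)"
    by (simp add: X_def)
  also have "card ((\<lambda>j. j + 2) ` J) = count (mset ws) p"
    by (simp add: card_image inj_on_def J_def count_mset count_list_eq_length_filter
        length_filter_conv_card eq_commute)
  finally show ?thesis
    by (simp add: ws_def)
qed

lemma upword_iff_windows:
  "upword n a b v \<longleftrightarrow>
     n \<le> length v + 1 \<and> 0 \<notin> set v \<and> distinct (take (n - 1) v) \<and>
     (\<forall>w\<in>set (windows n v). distinct w) \<and>
     distinct (map red (windows n v)) \<and>
     set (map red (windows n v)) = {p. perm_list n p} - first_covered n a b v"
proof -
  have windows_distinct:
    "(\<forall>j. j + n \<le> length v \<longrightarrow> distinct (take n (drop j v))) \<longleftrightarrow> (\<forall>w\<in>set (windows n v). distinct w)"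
    by (auto simp: set_windows)
  show ?thesis
  proof (cases "n \<le> length v + 1 \<and> (\<forall>w\<in>set (windows n v). distinct w)")
    case True
    have windows_perms: "set (map red (windows n v)) \<subseteq> {p. perm_list n p}"
      using True perm_list_red_windows by blast
    have first_perms: "first_covered n a b v \<subseteq> {p. perm_list n p}"
      by (auto simp: first_covered_def)
    have "(\<forall>p. perm_list n p \<longrightarrow> card {i \<in> {1..length v + 2 - n}. covers n a b v i p} = 1)
      \<longleftrightarrow> (\<forall>p\<in>{p. perm_list n p}.
        of_bool (p \<in> first_covered n a b v) + count (mset (map red (windows n v))) p = 1)"
      using True card_covering_factors by auto
    also have "\<dots> \<longleftrightarrow> distinct (map red (windows n v)) \<and>
        set (map red (windows n v)) = {p. perm_list n p} - first_covered n a b v"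
      by (rule count_eq_one_iff_distinct_set_Diff[OF windows_perms first_perms])
    finally show ?thesis
      using True windows_distinct by (simp add: upword_def)
  next
    case False
    then show ?thesis
      using windows_distinct by (auto simp: upword_def)
  qed
qed

lemma (in wf_digraph) awalk_filter_loop:
  assumes "awalk u p v" "tail G e = head G e"
  shows "awalk u (filter (\<lambda>x. x \<noteq> e) p) v"
  using assms by (induction p arbitrary: u) (auto simp: awalk_simps)

lemma (in fin_digraph) trail_omitting_loop_and_in_arc:
  assumes "connected G" "\<And>v. v \<in> verts G \<Longrightarrow> in_degree G v = out_degree G v"
    and "e0 \<in> arcs G" "tail G e0 = u" "head G e0 = u" and "e1 \<in> arcs G" "head G e1 = u"
  shows "\<exists>q w. trail u q w \<and> set q = arcs G - {e0, e1}"
proof -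
  obtain v p where "euler_trail v p v"
    using closed_euler1 assms(1,2) by blast
  then have p: "awalk v p v" "distinct p" "set p = arcs G"
    by (auto simp: euler_trail_def trail_def)
  then obtain p1 p2 where split: "p = p1 @ e1 # p2"
    using assms(6) by (metis split_list)
  then have "awalk v p1 (tail G e1)" "awalk u p2 v"
    using p(1) assms(7) by (auto simp: awalk_Cons_iff)
  then have "awalk u (p2 @ p1) (tail G e1)"
    by (intro awalk_appendI)
  then have "awalk u (filter (\<lambda>x. x \<noteq> e0) (p2 @ p1)) (tail G e1)"
    using assms(4,5) by (intro awalk_filter_loop) auto
  moreover have "distinct (filter (\<lambda>x. x \<noteq> e0) (p2 @ p1))"
    using p(2) split by auto
  moreover have "set (filter (\<lambda>x. x \<noteq> e0) (p2 @ p1)) = arcs G - {e0, e1}"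
    using p(2,3) split by auto
  ultimately show ?thesis
    unfolding trail_def by blast
qed

lemma (in pre_digraph) length_filter_tail_le:
  "cas u p v \<Longrightarrow>
    length (filter (\<lambda>e. tail G e = x) p) \<le> length (filter (\<lambda>e. head G e = x) p) + of_bool (x = u)"
proof (induction p arbitrary: u)
  case (Cons e p)
  then have "tail G e = u" "cas (head G e) p v"
    by simp_all
  moreover have "length (filter (\<lambda>e. tail G e = x) p)
      \<le> length (filter (\<lambda>e. head G e = x) p) + of_bool (x = head G e)"
    using Cons calculation(2) by blast
  ultimately show ?case
    by (cases "x = u"; cases "x = head G e") auto
qed simp

lemma (in fin_digraph) loop_among_omitted_in_arcs:
  assumes balanced: "in_degree G u = out_degree G u"
    and walk: "cas u p w" "distinct p" "set p = arcs G - F"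
    and F: "F \<subseteq> in_arcs G u" "2 \<le> card F"
  shows "\<exists>e\<in>F. tail G e = u"
proof (rule ccontr)
  assume no_loop: "\<not> ?thesis"
  have finF: "finite F"
    using F(1) finite_subset finite_in_arcs by blast
  have "out_arcs G u = {e \<in> set p. tail G e = u}"
    using no_loop walk(3) by (auto simp: out_arcs_def)
  then have "out_degree G u = length (filter (\<lambda>e. tail G e = u) p)"
    using walk(2) by (simp add: out_degree_def distinct_length_filter Collect_conj_eq Int_commute)
  also have "\<dots> \<le> length (filter (\<lambda>e. head G e = u) p) + 1"
    using length_filter_tail_le[OF walk(1), of u] by simp
  also have "length (filter (\<lambda>e. head G e = u) p) = card (in_arcs G u - F)"
  proof -
    have "in_arcs G u - F = {e \<in> set p. head G e = u}"
      using walk(3) by (auto simp: in_arcs_def)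
    then show ?thesis
      using walk(2) by (simp add: distinct_length_filter Collect_conj_eq Int_commute)
  qed
  also have "card (in_arcs G u - F) = in_degree G u - card F"
    using F(1) finF by (simp add: in_degree_def card_Diff_subset)
  finally show False
    using balanced F(2) card_mono[OF finite_in_arcs F(1)] by (simp add: in_degree_def)
qed

definition overlap_graph :: "nat \<Rightarrow> (nat list, nat list) pre_digraph" where
  "overlap_graph m =
     \<lparr>verts = {s. perm_list m s}, arcs = {p. perm_list (Suc m) p},
      tail = \<lambda>p. red (take m p), head = \<lambda>p. red (tl p)\<rparr>"

lemma overlap_graph_simps [simp]:
  "verts (overlap_graph m) = {s. perm_list m s}"
  "arcs (overlap_graph m) = {p. perm_list (Suc m) p}"
  "tail (overlap_graph m) = (\<lambda>p. red (take m p))"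
  "head (overlap_graph m) = (\<lambda>p. red (tl p))"
  by (simp_all add: overlap_graph_def)

interpretation overlap_graph: fin_digraph "overlap_graph m" for m
proof
  fix p assume "p \<in> arcs (overlap_graph m)"
  then have "distinct p" "length p = Suc m"
    by (simp_all add: perm_list_distinct perm_list_length)
  then show "tail (overlap_graph m) p \<in> verts (overlap_graph m)"
    "head (overlap_graph m) p \<in> verts (overlap_graph m)"
    using perm_list_red[of "take m p"] perm_list_red[of "tl p"] by (simp_all add: distinct_tl)
qed (simp_all add: finite_perm_lists)

lemma in_degree_overlap_graph: "in_degree (overlap_graph m) s = out_degree (overlap_graph m) s"
proof -
  have "rotate1 ` in_arcs (overlap_graph m) s = out_arcs (overlap_graph m) s"
  proof (intro equalityI subsetI)
    fix q assume "q \<in> rotate1 ` in_arcs (overlap_graph m) s"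
    then obtain p where p: "perm_list (Suc m) p" "red (tl p) = s" "q = rotate1 p"
      by (auto simp: in_arcs_def)
    then obtain x xs where x: "p = x # xs"
      by (cases p) (auto simp: perm_list_def)
    then have "perm_list (Suc m) q" "take m q = xs"
      using p by (auto simp: perm_list_def)
    then show "q \<in> out_arcs (overlap_graph m) s"
      using p(2) x by (simp add: out_arcs_def)
  next
    fix q assume "q \<in> out_arcs (overlap_graph m) s"
    then have q: "perm_list (Suc m) q" "red (take m q) = s"
      by (auto simp: out_arcs_def)
    define p where "p = last q # butlast q"
    have "q \<noteq> []"
      using q(1) by (auto simp: perm_list_def)
    then have rot: "rotate1 p = q"
      by (simp add: p_def)
    then have "perm_list (Suc m) p"
      using q(1) unfolding perm_list_def by (metis length_rotate1 set_rotate1)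
    moreover have "red (tl p) = s"
      using q by (simp add: p_def perm_list_def butlast_conv_take)
    ultimately show "q \<in> rotate1 ` in_arcs (overlap_graph m) s"
      using rot by (intro rev_image_eqI[of p]) (simp_all add: in_arcs_def)
  qed
  moreover have "inj_on rotate1 (in_arcs (overlap_graph m) s)"
    by (rule inj_on_subset[OF inj_rotate1]) simp
  ultimately show ?thesis
    unfolding in_degree_def out_degree_def by (metis card_image)
qed

lemma cas_overlap_graph_windows:
  assumes "\<forall>w\<in>set (windows (Suc m) v). distinct w" "m \<le> length v"
  shows "overlap_graph.cas m (red (take m v)) (map red (windows (Suc m) v))
    (red (drop (length v - m) v))"
  using assms
proof (induction v)
  case Nil
  then show ?case
    by (simp add: windows_def)
next
  case (Cons x v)
  show ?case
  proof (cases "m \<le> length v")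
    case True
    define w where "w = take (Suc m) (x # v)"
    have w: "windows (Suc m) (x # v) = w # windows (Suc m) v" "distinct w"
      using Cons.prems True by (simp_all add: windows_Cons w_def)
    have "take m w = take m (x # v)" "tl w = take m v"
      unfolding w_def take_take by simp_all
    then have "red (take m (red w)) = red (take m (x # v))" "red (tl (red w)) = red (take m v)"
      using red_red_take_drop[OF w(2), of m 0] red_red_take_drop[OF w(2), of "Suc m" 1]
      by (simp_all add: w_def drop_Suc)
    moreover have "drop (length (x # v) - m) (x # v) = drop (length v - m) v"
      using True by (simp add: Suc_diff_le)
    ultimately show ?thesis
      using Cons True w by simp
  next
    case False
    then have "length (x # v) = m"
      using Cons.prems by simp
    then show ?thesis
      by (simp add: windows_def)
  qed
qed

lemma connected_overlap_graph: "connected (overlap_graph m)"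
proof (rule overlap_graph.connectedI)
  show "verts (overlap_graph m) \<noteq> {}"
    using perm_list_upt by auto
  fix s t assume "s \<in> verts (overlap_graph m)" "t \<in> verts (overlap_graph m)"
  then have s: "perm_list m s" and t: "perm_list m t"
    by simp_all
  define w where "w = s @ map (\<lambda>x. x + m) t"
  have "distinct w"
    using s t perm_list_distinct[OF s] perm_list_distinct[OF t]
    by (auto simp: w_def perm_list_def distinct_map inj_on_def)
  then have "\<forall>u\<in>set (windows (Suc m) w). distinct u"
    by (auto simp: set_windows)
  moreover have "m \<le> length w" "distinct (take m w)"
    using s \<open>distinct w\<close> by (simp_all add: w_def perm_list_length)
  ultimately have "overlap_graph.awalk m (red (take m w)) (map red (windows (Suc m) w))
      (red (drop (length w - m) w))"
    using perm_list_red[of "take m w"] perm_list_red_windows[of "Suc m" w]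
      cas_overlap_graph_windows[of m w]
    by (simp add: overlap_graph.awalk_def)
  moreover have "red (take m w) = s" "red (drop (length w - m) w) = t"
    using s t red_map_strict_mono[of t "\<lambda>x. x + m"]
    by (simp_all add: w_def perm_list_length red_perm_list perm_list_distinct strict_mono_def)
  ultimately show "s \<rightarrow>\<^sup>*\<^bsub>mk_symmetric (overlap_graph m)\<^esub> t"
    by (metis overlap_graph.reachable_awalkI overlap_graph.reachable_mk_symmetricI)
qed

lemma exists_odd_threshold:
  fixes y :: "nat list"
  assumes "distinct y" "0 \<notin> set y"
    and closed: "\<And>i j. i < length y \<Longrightarrow> j < length y \<Longrightarrow> y ! j < y ! i \<Longrightarrow> P i \<Longrightarrow> P j"
  shows "\<exists>x. odd x \<and> (\<forall>i<length y. P i \<longleftrightarrow> 2 * y ! i < x)"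
proof -
  define M where "M = Max (insert 0 {y ! i | i. i < length y \<and> P i})"
  have "P i \<longleftrightarrow> 2 * y ! i < Suc (2 * M)" if i: "i < length y" for i
  proof
    assume "P i"
    then have "y ! i \<le> M"
      unfolding M_def using i by (intro Max_ge) auto
    then show "2 * y ! i < Suc (2 * M)"
      by simp
  next
    assume less: "2 * y ! i < Suc (2 * M)"
    have "M \<in> insert 0 {y ! i | i. i < length y \<and> P i}"
      unfolding M_def by (intro Max_in) auto
    moreover have "y ! i \<noteq> 0"
      using assms(2) i by (metis nth_mem)
    ultimately obtain k where k: "k < length y" "P k" "y ! i \<le> y ! k"
      using less by auto
    then have "y ! i < y ! k \<or> i = k"
      using assms(1) i nth_eq_iff_index_eq by fastforce
    then show "P i"
      using closed[OF k(1) i] k(2) by blast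
  qed
  then show ?thesis
    by (intro exI[of _ "Suc (2 * M)"]) simp
qed

lemma exists_Cons_with_pattern:
  assumes e: "perm_list (Suc m) e" and y: "distinct y" "0 \<notin> set y" "red y = red (tl e)"
  shows "\<exists>x>0. distinct (x # map (\<lambda>z. 2 * z) y) \<and> red (x # map (\<lambda>z. 2 * z) y) = e"
proof -
  have de: "distinct e" and le: "length e = Suc m"
    using e by (simp_all add: perm_list_distinct perm_list_length)
  have ly: "length y = m"
    using arg_cong[OF y(3), of length] le by simp
  have pattern: "same_pattern y (tl e)"
    using y de by (simp add: red_eq_iff_same_pattern distinct_tl)
  then have "y ! i < y ! j \<longleftrightarrow> e ! Suc i < e ! Suc j" if "i < m" "j < m" for i j
    using that ly le by (simp add: same_pattern_def nth_tl)
  then obtain x where x: "odd x" "\<forall>i<m. e ! Suc i < e ! 0 \<longleftrightarrow> 2 * y ! i < x"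
    using exists_odd_threshold[OF y(1,2), of "\<lambda>i. e ! Suc i < e ! 0"] ly by fastforce
  have "e ! Suc i \<noteq> e ! 0" if "i < m" for i
    using de le that by (simp add: nth_eq_iff_index_eq)
  moreover have "2 * y ! i \<noteq> x" for i
    using x(1) by presburger
  ultimately have "\<forall>i<m. (x < 2 * y ! i \<longleftrightarrow> e ! 0 < e ! Suc i) \<and> (2 * y ! i < x \<longleftrightarrow> e ! Suc i < e ! 0)"
    using x(2) by (metis linorder_neqE_nat less_asym)
  moreover have "same_pattern (map (\<lambda>z. 2 * z) y) (tl e)"
    using same_pattern_map_strict_mono[of "\<lambda>z. 2 * z" y] pattern
    by (auto simp: strict_mono_def intro: same_pattern_trans)
  ultimately have "same_pattern (x # map (\<lambda>z. 2 * z) y) (e ! 0 # tl e)"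
    using ly le by (simp add: same_pattern_Cons nth_tl)
  moreover have "distinct (x # map (\<lambda>z. 2 * z) y)"
    using y(1) \<open>\<And>i. 2 * y ! i \<noteq> x\<close> by (auto simp: distinct_map inj_on_def in_set_conv_nth)
  moreover have "e ! 0 # tl e = e"
    using le by (cases e) auto
  ultimately show ?thesis
    using de red_perm_list[OF e] x(1) red_eq_iff_same_pattern by (metis odd_pos)
qed

lemma exists_word_of_walk:
  assumes "overlap_graph.awalk m s q t"
  shows "\<exists>v. length v = length q + m \<and> 0 \<notin> set v \<and> red (take m v) = s \<and>
    (\<forall>w\<in>set (windows (Suc m) v). distinct w) \<and> map red (windows (Suc m) v) = q"
  using assms
proof (induction q arbitrary: s)
  case Nil
  then have s: "perm_list m s"
    by (auto simp: overlap_graph.awalk_Nil_iff)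
  then show ?case
    using red_perm_list[OF s] by (intro exI[of _ s]) (auto simp: perm_list_def windows_def)
next
  case (Cons e q)
  then have e: "perm_list (Suc m) e" "red (take m e) = s"
    and walk: "overlap_graph.awalk m (red (tl e)) q t"
    by (auto simp: overlap_graph.awalk_Cons_iff)
  obtain v where v: "length v = length q + m" "0 \<notin> set v" "red (take m v) = red (tl e)"
    "\<forall>w\<in>set (windows (Suc m) v). distinct w" "map red (windows (Suc m) v) = q"
    using Cons.IH[OF walk] by blast
  have "distinct (red (tl e))"
    using perm_list_distinct[OF e(1)] by (simp add: distinct_tl)
  then have "distinct (take m v)"
    using v(3) by (metis distinct_red)
  moreover have "0 \<notin> set (take m v)"
    using v(2) in_set_takeD by fastforce
  \<comment> \<open>doubling all letters keeps every pattern and frees the odd values for a new first letter\<close>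
  ultimately obtain x where x: "0 < x" "distinct (x # map (\<lambda>z. 2 * z) (take m v))"
    "red (x # map (\<lambda>z. 2 * z) (take m v)) = e"
    using exists_Cons_with_pattern[OF e(1)] v(3) by blast
  define v' where "v' = x # map (\<lambda>z. 2 * z) v"
  have windows_v': "windows (Suc m) v' =
      (x # map (\<lambda>z. 2 * z) (take m v)) # map (map (\<lambda>z. 2 * z)) (windows (Suc m) v)"
    using v(1) by (simp add: v'_def windows_Cons windows_map take_map)
  have "take m v' = take m (x # map (\<lambda>z. 2 * z) (take m v))"
    by (cases m) (simp_all add: v'_def take_map)
  then have "red (take m v') = s"
    using red_red_take_drop[OF x(2), of m 0] x(3) e(2) by simp
  moreover have "\<forall>w\<in>set (windows (Suc m) v'). distinct w"
    using x(2) v(4) by (auto simp: windows_v' distinct_map inj_on_def)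
  moreover have "map red (windows (Suc m) v') = e # q"
    using x(3) v(4,5) red_map_strict_mono[of _ "\<lambda>z. 2 * z"]
    by (auto simp: windows_v' strict_mono_def)
  moreover have "length v' = length (e # q) + m" "0 \<notin> set v'"
    using v(1,2) x(1) by (auto simp: v'_def)
  ultimately show ?case
    by (intro exI[of _ v']) simp
qed

lemma first_covered_eq:
  assumes "perm_list m (red (take m v))" "a \<in> {1..Suc m}" "b \<in> {1..Suc m}"
  shows "first_covered (Suc m) a b v = {cons_perm a (red (take m v)), cons_perm b (red (take m v))}"
  using assms perm_list_eq_cons_perm[OF _ assms(1)] perm_list_cons_perm[OF assms(1)]
    red_tl_cons_perm[OF assms(1)]
  by (auto simp: first_covered_def cons_perm_simps)

lemma loop_if_upword:
  assumes "upword (Suc m) a b v" "1 \<le> a" "a < b" "b \<le> Suc m"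
  shows "\<exists>p\<in>first_covered (Suc m) a b v. red (take m p) = red (take m v)"
proof -
  define \<sigma> where "\<sigma> = red (take m v)"
  define F where "F = first_covered (Suc m) a b v"
  define ws where "ws = map red (windows (Suc m) v)"
  have v: "m \<le> length v" "distinct (take m v)" "\<forall>w\<in>set (windows (Suc m) v). distinct w"
    and ws: "distinct ws" "set ws = {p. perm_list (Suc m) p} - F"
    using assms(1) unfolding upword_iff_windows ws_def F_def by simp_all
  have \<sigma>: "perm_list m \<sigma>"
    using perm_list_red[OF v(2)] v(1) by (simp add: \<sigma>_def)
  have F_eq: "F = {cons_perm a \<sigma>, cons_perm b \<sigma>}"
    using first_covered_eq[of m v a b] \<sigma> assms(2-4) by (simp add: \<sigma>_def F_def)
  have "cons_perm a \<sigma> \<noteq> cons_perm b \<sigma>"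
    using assms(3) cons_perm_simps(1)[of a \<sigma>] cons_perm_simps(1)[of b \<sigma>] by auto
  then have "card F = 2"
    by (simp add: F_eq)
  moreover have "F \<subseteq> in_arcs (overlap_graph m) \<sigma>"
    by (auto simp: F_def first_covered_def in_arcs_def \<sigma>_def)
  moreover have "overlap_graph.cas m \<sigma> ws (red (drop (length v - m) v))"
    using cas_overlap_graph_windows[OF v(3,1)] by (simp add: \<sigma>_def ws_def)
  ultimately have "\<exists>p\<in>F. tail (overlap_graph m) p = \<sigma>"
    using overlap_graph.loop_among_omitted_in_arcs[OF in_degree_overlap_graph _ ws(1)] ws(2)
    by simp
  then show ?thesis
    by (simp add: F_def \<sigma>_def)
qed

lemma upword_if_loop:
  assumes "perm_list m \<sigma>" "1 \<le> a" "a < b" "b \<le> Suc m"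
    and loop: "perm_list (Suc m) p" "hd p \<in> {a, b}" "red (tl p) = \<sigma>" "red (take m p) = \<sigma>"
  shows "\<exists>v. upword (Suc m) a b v \<and> red (take m v) = \<sigma>"
proof -
  define p' where "p' = cons_perm (if hd p = a then b else a) \<sigma>"
  have p': "perm_list (Suc m) p'" "red (tl p') = \<sigma>"
    using assms perm_list_cons_perm red_tl_cons_perm by (auto simp: p'_def)
  have arcs: "{p, p'} = {cons_perm a \<sigma>, cons_perm b \<sigma>}"
    using perm_list_eq_cons_perm[OF loop(1) assms(1) loop(3)] loop(2) by (auto simp: p'_def)
  obtain q t where "overlap_graph.trail m \<sigma> q t" "set q = {e. perm_list (Suc m) e} - {p, p'}"
    using overlap_graph.trail_omitting_loop_and_in_arc[OF connected_overlap_graph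
        in_degree_overlap_graph, of p m \<sigma> p'] loop p'
    by auto
  then have q: "overlap_graph.awalk m \<sigma> q t" "distinct q" "set q = {e. perm_list (Suc m) e} - {p, p'}"
    by (auto simp: overlap_graph.trail_def)
  obtain v where v: "length v = length q + m" "0 \<notin> set v" "red (take m v) = \<sigma>"
    "\<forall>w\<in>set (windows (Suc m) v). distinct w" "map red (windows (Suc m) v) = q"
    using exists_word_of_walk[OF q(1)] by blast
  have "distinct (take m v)"
    using v(3) perm_list_distinct[OF assms(1)] by (metis distinct_red)
  moreover have "first_covered (Suc m) a b v = {p, p'}"
    using first_covered_eq[of m v a b] assms v(3) arcs by simp
  ultimately have "upword (Suc m) a b v"
    using v q(2,3) by (simp add: upword_iff_windows)
  then show ?thesis
    using v(3) by blast
qed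

lemma exists_upword_iff_loop:
  assumes "perm_list m \<sigma>" "1 \<le> a" "a < b" "b \<le> Suc m"
  shows "(\<exists>v. upword (Suc m) a b v \<and> red (take m v) = \<sigma>) \<longleftrightarrow>
    (\<exists>p. perm_list (Suc m) p \<and> hd p \<in> {a, b} \<and> red (tl p) = \<sigma> \<and> red (take m p) = \<sigma>)"
proof
  assume "\<exists>v. upword (Suc m) a b v \<and> red (take m v) = \<sigma>"
  then obtain v where "upword (Suc m) a b v" "red (take m v) = \<sigma>"
    by blast
  then show "\<exists>p. perm_list (Suc m) p \<and> hd p \<in> {a, b} \<and> red (tl p) = \<sigma> \<and> red (take m p) = \<sigma>"
    using loop_if_upword[OF _ assms(2-4)] by (fastforce simp: first_covered_def)
next
  assume "\<exists>p. perm_list (Suc m) p \<and> hd p \<in> {a, b} \<and> red (tl p) = \<sigma> \<and> red (take m p) = \<sigma>"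
  then show "\<exists>v. upword (Suc m) a b v \<and> red (take m v) = \<sigma>"
    using upword_if_loop[OF assms] by blast
qed

lemma exists_loop_iff_monotone:
  assumes "1 \<le> a" "a < b" "b \<le> Suc m"
  shows "(\<exists>p. perm_list (Suc m) p \<and> hd p \<in> {a, b} \<and> red (tl p) = \<sigma> \<and> red (take m p) = \<sigma>) \<longleftrightarrow>
    (a = 1 \<and> \<sigma> = [1..<Suc m]) \<or> (b = Suc m \<and> \<sigma> = rev [1..<Suc m])"
proof
  assume "\<exists>p. perm_list (Suc m) p \<and> hd p \<in> {a, b} \<and> red (tl p) = \<sigma> \<and> red (take m p) = \<sigma>"
  then obtain p where p: "perm_list (Suc m) p" "hd p \<in> {a, b}" "red (tl p) = \<sigma>" "red (take m p) = \<sigma>"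
    by blast
  then consider "p = [1..<Suc (Suc m)]" | "p = rev [1..<Suc (Suc m)]"
    using perm_list_self_overlap by metis
  then show "(a = 1 \<and> \<sigma> = [1..<Suc m]) \<or> (b = Suc m \<and> \<sigma> = rev [1..<Suc m])"
  proof cases
    case 1
    then have "hd p = 1"
      by (simp add: upt_conv_Cons del: upt_Suc)
    then show ?thesis
      using p(2,4) assms 1 red_take_tl_upt(1)[of m] by (auto simp del: upt_Suc)
  next
    case 2
    then have "hd p = Suc m"
      by simp
    then show ?thesis
      using p(2,3) assms 2 red_take_tl_rev_upt(2)[of m] by (auto simp del: upt_Suc)
  qed
next
  assume "(a = 1 \<and> \<sigma> = [1..<Suc m]) \<or> (b = Suc m \<and> \<sigma> = rev [1..<Suc m])"
  then show "\<exists>p. perm_list (Suc m) p \<and> hd p \<in> {a, b} \<and> red (tl p) = \<sigma> \<and> red (take m p) = \<sigma>"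
  proof
    assume "a = 1 \<and> \<sigma> = [1..<Suc m]"
    then show ?thesis
      using perm_list_upt[of "Suc m"] red_take_tl_upt[of m]
      by (intro exI[of _ "[1..<Suc (Suc m)]"]) (simp add: upt_conv_Cons del: upt_Suc)
  next
    assume "b = Suc m \<and> \<sigma> = rev [1..<Suc m]"
    moreover have "hd (rev [1..<Suc (Suc m)]) = Suc m"
      by simp
    ultimately show ?thesis
      using perm_list_rev_upt[of "Suc m"] red_take_tl_rev_upt[of m]
      by (intro exI[of _ "rev [1..<Suc (Suc m)]"]) (simp del: upt_Suc)
  qed
qed

theorem theorem5:
  fixes n a b :: nat and \<sigma> :: "nat list"
  assumes "n \<ge> 2" and "1 \<le> a" and "a < b" and "b \<le> n"
    and "perm_list (n - 1) \<sigma>"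
  shows "(\<exists>v. upword n a b v \<and> red (take (n - 1) v) = \<sigma>) \<longleftrightarrow>
         ((a = 1 \<and> \<sigma> = [1..<n]) \<or> (b = n \<and> \<sigma> = rev [1..<n]))"
proof -
  obtain m where n: "n = Suc m"
    using assms(1) by (cases n) auto
  show ?thesis
    using exists_upword_iff_loop[of m \<sigma> a b] exists_loop_iff_monotone[of a b m \<sigma>] assms n
    by simp
qed

end
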